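(* For every rational number $s>1$, $g(s)=\frac{s+1}{2s}$.
   Context: Let $\mathbb{F}$ be a finite field and $x_1,\dots,x_p$ a basis of $\mathbb{F}^p$. A $[t\times m,p]$ array code is a $t\times m$ array whose entries (cells) are linear combinations of $x_1,\dots,x_p$. It has the $k$-PIR property (is a $[t\times m,p]$ $k$-PIR array code) if for every $i\in\{1,\dots,p\}$ there exist $k$ pairwise disjoint sets $S_1,\dots,S_k$ of columns such that for every $j$ the vector $x_i$ lies in the linear span of all entries of the columns in $S_j$. Its PIR rate is $k/m$. For a rational $s>1$ and a positive integer $t$ with $st$ an integer, $g(s,t)$ is the largest PIR rate $k/m$ of a $[t\times m,st]$ $k$-PIR array code (over all finite fields, all $m$ and all $k$), and $g(s)=\limsup_{t\to\infty} g(s,t)$, with $t$ ranging over positive integers such that $st$ is an integer. *)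

theory Defs
  imports Complex_Main "HOL-Algebra.Ring" "HOL-Library.Extended_Real" "HOL-Library.Liminf_Limsup"
begin

text \<open>A [t x m, p] array code over a field R: cell (r,c) (r < t, c < m) is the linear
combination of the basis vectors x_0..x_{p-1} with coefficient vector (\<lambda>l. A r c l).
Finite fields are represented (up to isomorphism) with carrier a set of naturals.\<close>

definition is_array_code :: "nat ring \<Rightarrow> nat \<Rightarrow> nat \<Rightarrow> nat \<Rightarrow> (nat \<Rightarrow> nat \<Rightarrow> nat \<Rightarrow> nat) \<Rightarrow> bool" where
  "is_array_code R t m p A \<longleftrightarrow> (\<forall>r<t. \<forall>c<m. \<forall>l<p. A r c l \<in> carrier R)"

definition in_col_span :: "nat ring \<Rightarrow> nat \<Rightarrow> nat \<Rightarrow> (nat \<Rightarrow> nat \<Rightarrow> nat \<Rightarrow> nat) \<Rightarrow> nat set \<Rightarrow> nat \<Rightarrow> bool" where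
  "in_col_span R t p A S i \<longleftrightarrow>
     (\<exists>coef :: nat \<times> nat \<Rightarrow> nat. (\<forall>rc \<in> {0..<t} \<times> S. coef rc \<in> carrier R) \<and>
        (\<forall>l<p. finsum R (\<lambda>(r, c). coef (r, c) \<otimes>\<^bsub>R\<^esub> A r c l) ({0..<t} \<times> S)
               = (if l = i then \<one>\<^bsub>R\<^esub> else \<zero>\<^bsub>R\<^esub>)))"

definition is_PIR_array_code :: "nat ring \<Rightarrow> nat \<Rightarrow> nat \<Rightarrow> nat \<Rightarrow> nat \<Rightarrow> (nat \<Rightarrow> nat \<Rightarrow> nat \<Rightarrow> nat) \<Rightarrow> bool" where
  "is_PIR_array_code R t m p k A \<longleftrightarrow> is_array_code R t m p A \<and>
     (\<forall>i<p. \<exists>S :: nat \<Rightarrow> nat set.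
        (\<forall>j<k. S j \<subseteq> {0..<m}) \<and>
        (\<forall>j<k. \<forall>j'<k. j \<noteq> j' \<longrightarrow> S j \<inter> S j' = {}) \<and>
        (\<forall>j<k. in_col_span R t p A (S j) i))"

text \<open>g(s,t): supremum (the paper's "largest") PIR rate k/m over all finite fields, m, k.\<close>
definition g_st :: "rat \<Rightarrow> nat \<Rightarrow> ereal" where
  "g_st s t = Sup {ereal (real k / real m) | k m. m > 0 \<and>
      (\<exists>(R :: nat ring) p A. field R \<and> finite (carrier R) \<and> of_nat p = s * of_nat t \<and>
         is_PIR_array_code R t m p k A)}"

definition g_s :: "rat \<Rightarrow> ereal" where
  "g_s s = Limsup (inf sequentially (principal {t :: nat. t > 0 \<and> s * of_nat t \<in> \<int>})) (g_st s)"

end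

theory Submission
  imports Defs
begin

text \<open>A recovering set for \<open>x\<^sub>i\<close> consisting of at least two columns uses up two columns,
  while a single column, whose \<open>t\<close> cells span a space of dimension at most \<open>t\<close>, is a
  recovering set for at most \<open>t\<close> symbols. Hence \<open>2pk \<le> pm + tm\<close>, i.e.
  \<open>k/m \<le> (p + t)/(2p) = (s + 1)/(2s)\<close>.

  Conversely, label binary columns by pairs \<open>(c, W)\<close> with \<open>c < p\<close> and \<open>W \<subseteq> {0..p-1}\<close>;
  row \<open>r < t - 1\<close> of column \<open>(c, W)\<close> holds \<open>x\<close> indexed by \<open>(c + r) mod p\<close>, and its last
  row holds the sum of the \<open>x\<^sub>l\<close> with \<open>l \<in> W\<close>. The symbol \<open>x\<^sub>i\<close> is read off a single column whenever it occurs
  among that column's shifts, and otherwise off the pair \<open>(c, W - {i})\<close>, \<open>(c, W \<union> {i})\<close> in the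
  last row. This gives rate \<open>(p + t - 1)/(2p)\<close>, which tends to \<open>(s + 1)/(2s)\<close> as
  \<open>t \<rightarrow> \<infinity>\<close> with \<open>p = st\<close>.\<close>

section \<open>Unit vectors in the span of few rows\<close>

context cring
begin

definition unit_in_row_span :: "nat \<Rightarrow> (nat \<Rightarrow> 'c \<Rightarrow> 'a) \<Rightarrow> 'c set \<Rightarrow> 'c \<Rightarrow> bool" where
  "unit_in_row_span t v D i \<longleftrightarrow> (\<exists>\<alpha>. (\<forall>r<t. \<alpha> r \<in> carrier R) \<and>
     (\<forall>l\<in>D. (\<Oplus>r\<in>{..<t}. \<alpha> r \<otimes> v r l) = (if l = i then \<one> else \<zero>)))"

lemma finsum_lessThan_Suc:
  assumes "f \<in> {..t} \<rightarrow> carrier R"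
  shows "(\<Oplus>r\<in>{..<Suc t}. f r) = (\<Oplus>r\<in>{..<t}. f r) \<oplus> f t"
proof -
  have "{..<Suc t} = insert t {..<t}" by auto
  then show ?thesis using assms by (simp add: finsum_insert Pi_def add.m_comm)
qed

lemma finsum_mult_add_mult:
  assumes "finite A" "\<forall>r\<in>A. \<alpha> r \<in> carrier R \<and> a r \<in> carrier R \<and> b r \<in> carrier R" "c \<in> carrier R"
  shows "(\<Oplus>r\<in>A. \<alpha> r \<otimes> (a r \<oplus> b r \<otimes> c)) = (\<Oplus>r\<in>A. \<alpha> r \<otimes> a r) \<oplus> (\<Oplus>r\<in>A. \<alpha> r \<otimes> b r) \<otimes> c"
  using assms
proof (induction A rule: finite_induct)
  case (insert x F)
  then show ?case by (simp add: Pi_def finsum_insert r_distr l_distr m_assoc add.m_ac)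
qed simp

lemma unit_in_row_span_drop_zero_row:
  assumes v: "\<forall>r<t. \<forall>l\<in>D. v r l \<in> carrier R" and zero: "\<forall>l\<in>D. v t l = \<zero>"
    and span: "unit_in_row_span (Suc t) v D i"
  shows "unit_in_row_span t v D i"
proof -
  obtain \<alpha> where \<alpha>: "\<forall>r<Suc t. \<alpha> r \<in> carrier R"
    and comb: "\<forall>l\<in>D. (\<Oplus>r\<in>{..<Suc t}. \<alpha> r \<otimes> v r l) = (if l = i then \<one> else \<zero>)"
    using span unfolding unit_in_row_span_def by blast
  have "(\<Oplus>r\<in>{..<t}. \<alpha> r \<otimes> v r l) = (if l = i then \<one> else \<zero>)" if l: "l \<in> D" for l
  proof -
    have "(\<lambda>r. \<alpha> r \<otimes> v r l) \<in> {..t} \<rightarrow> carrier R"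
      using \<alpha> v zero l by (auto simp: le_less)
    then show ?thesis
      using comb \<alpha> v zero l finsum_lessThan_Suc[of "\<lambda>r. \<alpha> r \<otimes> v r l" t]
      by (simp add: Pi_def)
  qed
  then show ?thesis using \<alpha> unfolding unit_in_row_span_def by (intro exI[of _ \<alpha>]) auto
qed

end

text \<open>One step of Gaussian elimination: row \<open>t\<close>, scaled by its pivot entry, clears the
  entries at \<open>l0\<close> of the other rows.\<close>

lemma (in field) unit_in_row_span_pivot:
  assumes v: "\<forall>r\<le>t. \<forall>l\<in>D. v r l \<in> carrier R"
    and pivot: "l0 \<in> D" "v t l0 \<noteq> \<zero>" "i \<noteq> l0"
    and span: "unit_in_row_span (Suc t) v D i"
  shows "unit_in_row_span t (\<lambda>r l. v r l \<oplus> v r l0 \<otimes> ((\<ominus> (inv (v t l0))) \<otimes> v t l)) D i"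
proof -
  obtain \<alpha> where \<alpha>: "\<forall>r<Suc t. \<alpha> r \<in> carrier R"
    and comb: "\<forall>l\<in>D. (\<Oplus>r\<in>{..<Suc t}. \<alpha> r \<otimes> v r l) = (if l = i then \<one> else \<zero>)"
    using span unfolding unit_in_row_span_def by blast
  define S where "S l = (\<Oplus>r\<in>{..<t}. \<alpha> r \<otimes> v r l)" for l
  have S: "S l \<in> carrier R" "S l \<oplus> \<alpha> t \<otimes> v t l = (if l = i then \<one> else \<zero>)" if "l \<in> D" for l
    using comb \<alpha> v that finsum_lessThan_Suc[of "\<lambda>r. \<alpha> r \<otimes> v r l" t]
    by (auto simp: S_def Pi_def less_Suc_eq_le)
  have w0: "v t l0 \<in> Units R" using pivot v field_Units by auto
  have S_pivot: "S l0 = \<ominus> (\<alpha> t \<otimes> v t l0)"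
    using S[OF pivot(1)] pivot(3) \<alpha> v pivot(1) by (intro sum_zero_eq_neg) auto
  have "S l0 \<otimes> ((\<ominus> (inv (v t l0))) \<otimes> v t l) = \<alpha> t \<otimes> v t l" if "l \<in> D" for l
  proof -
    have "\<alpha> t \<in> carrier R" "v t l0 \<in> carrier R" "inv (v t l0) \<in> carrier R" "v t l \<in> carrier R"
      using \<alpha> v w0 that by auto
    then show ?thesis using w0 S_pivot
      by (simp add: l_minus r_minus minus_minus m_assoc[symmetric])
         (simp add: m_assoc)
  qed
  moreover have "(\<Oplus>r\<in>{..<t}. \<alpha> r \<otimes> (v r l \<oplus> v r l0 \<otimes> ((\<ominus> (inv (v t l0))) \<otimes> v t l)))
      = S l \<oplus> S l0 \<otimes> ((\<ominus> (inv (v t l0))) \<otimes> v t l)" if "l \<in> D" for l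
    unfolding S_def using \<alpha> v w0 pivot(1) that by (intro finsum_mult_add_mult) auto
  ultimately show ?thesis
    using S \<alpha> unfolding unit_in_row_span_def by (intro exI[of _ \<alpha>]) auto
qed

lemma (in field) card_units_in_row_span:
  assumes "finite D" "I \<subseteq> D" "\<forall>r<t. \<forall>l\<in>D. v r l \<in> carrier R"
    "\<forall>i\<in>I. unit_in_row_span t v D i"
  shows "card I \<le> t"
  using assms(2-)
proof (induction t arbitrary: v I)
  case 0
  have "I = {}"
    using 0 unfolding unit_in_row_span_def by force
  then show ?case by simp
next
  case (Suc t)
  then have v: "\<forall>r\<le>t. \<forall>l\<in>D. v r l \<in> carrier R" by (simp add: less_Suc_eq_le)
  show ?case
  proof (cases "\<forall>l\<in>D. v t l = \<zero>")
    case True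
    then have "unit_in_row_span t v D i" if "i \<in> I" for i
      using unit_in_row_span_drop_zero_row[of t D v i] Suc.prems that by simp
    then have "card I \<le> t"
      using Suc.prems by (intro Suc.IH[of I v]) auto
    then show ?thesis by simp
  next
    case False
    then obtain l0 where l0: "l0 \<in> D" "v t l0 \<noteq> \<zero>" by blast
    then have "inv (v t l0) \<in> carrier R" using v field_Units by auto
    then have "card (I - {l0}) \<le> t"
      using Suc v l0 unit_in_row_span_pivot[OF v l0]
      by (intro Suc.IH[of "I - {l0}" "\<lambda>r l. v r l \<oplus> v r l0 \<otimes> ((\<ominus> (inv (v t l0))) \<otimes> v t l)"]) auto
    moreover have "finite I" using Suc.prems(1) assms(1) finite_subset by blast
    ultimately show ?thesis by (simp add: card_Diff_singleton_if split: if_splits)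
  qed
qed

section \<open>The upper bound on the PIR rate\<close>

lemma unit_in_row_span_of_column:
  fixes R (structure)
  assumes "field R" "is_array_code R t m p A" "c < m" "in_col_span R t p A {c} i"
  shows "cring.unit_in_row_span R t (\<lambda>r l. A r c l) {..<p} i"
proof -
  interpret field R by fact
  obtain coef where coef: "\<forall>rc \<in> {0..<t} \<times> {c}. coef rc \<in> carrier R"
    "\<forall>l<p. finsum R (\<lambda>(r, c). coef (r, c) \<otimes> A r c l) ({0..<t} \<times> {c}) = (if l = i then \<one> else \<zero>)"
    using assms(4) unfolding in_col_span_def by blast
  have column: "{0..<t} \<times> {c} = (\<lambda>r. (r, c)) ` {..<t}" by auto
  have "finsum R (\<lambda>(r, c). coef (r, c) \<otimes> A r c l) ({0..<t} \<times> {c}) = (\<Oplus>r\<in>{..<t}. coef (r, c) \<otimes> A r c l)"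
    if "l < p" for l
    unfolding column using coef(1) assms(2,3) that
    by (subst finsum_reindex) (auto simp: is_array_code_def inj_on_def)
  then show ?thesis
    using coef unfolding unit_in_row_span_def by (intro exI[of _ "\<lambda>r. coef (r, c)"]) auto
qed

lemma card_recoverable_from_column:
  fixes R (structure)
  assumes "field R" "is_array_code R t m p A" "c < m"
  shows "card {i\<in>{..<p}. in_col_span R t p A {c} i} \<le> t"
proof -
  interpret field R by fact
  show ?thesis
    using assms unit_in_row_span_of_column[OF assms]
    by (intro card_units_in_row_span[of "{..<p}" _ _ "\<lambda>r l. A r c l"]) (auto simp: is_array_code_def)
qed

lemma card_disjoint_family_singletons:
  fixes S :: "nat \<Rightarrow> 'a set"
  assumes C: "finite C" "\<forall>j<k. S j \<subseteq> C" and nonempty: "\<forall>j<k. S j \<noteq> {}"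
    and disjoint: "\<forall>j<k. \<forall>j'<k. j \<noteq> j' \<longrightarrow> S j \<inter> S j' = {}"
  shows "2 * k \<le> card C + card {c. \<exists>j<k. S j = {c}}"
proof -
  define J where "J = {j\<in>{..<k}. \<exists>c. S j = {c}}"
  have fin: "finite (S j)" if "j < k" for j using C that finite_subset by blast
  have "{c. \<exists>j<k. S j = {c}} = (\<lambda>j. the_elem (S j)) ` J"
    unfolding J_def by (auto intro!: image_eqI)
  moreover have "inj_on (\<lambda>j. the_elem (S j)) J"
    using disjoint unfolding J_def inj_on_def by fastforce
  ultimately have singletons: "card {c. \<exists>j<k. S j = {c}} = card J"
    by (simp add: card_image)
  have "(\<Sum>j<k. card (S j)) = card (\<Union>j<k. S j)"
    using fin disjoint by (intro card_UN_disjoint[symmetric]) auto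
  also have "\<dots> \<le> card C"
    using C by (intro card_mono) auto
  finally have sizes: "(\<Sum>j<k. card (S j)) \<le> card C" .
  have "2 * k = (\<Sum>j<k. 2)" by simp
  also have "\<dots> \<le> (\<Sum>j<k. card (S j) + (if j \<in> J then 1 else 0))"
  proof (intro sum_mono)
    fix j assume "j \<in> {..<k}"
    then show "2 \<le> card (S j) + (if j \<in> J then 1 else 0)"
      using fin nonempty unfolding J_def
      by (cases "card (S j)") (auto simp: card_1_singleton_iff Suc_le_eq)
  qed
  also have "\<dots> = (\<Sum>j<k. card (S j)) + card J"
    unfolding J_def by (simp add: sum.distrib sum.If_cases Int_def conj_commute)
  finally show ?thesis using sizes singletons by linarith
qed

lemma in_col_span_nonempty:
  fixes R (structure)
  assumes "field R" "i < p" "in_col_span R t p A S i"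
  shows "S \<noteq> {}"
proof
  assume "S = {}"
  interpret field R by fact
  show False
    using assms(2,3) \<open>S = {}\<close> unfolding in_col_span_def by force
qed

lemma PIR_array_code_rate_bound:
  fixes R (structure)
  assumes field: "field R" and code: "is_PIR_array_code R t m p k A"
  shows "2 * p * k \<le> m * (p + t)"
proof -
  let ?recovers = "\<lambda>i c. in_col_span R t p A {c} i"
  have per_symbol: "2 * k \<le> m + card {c\<in>{..<m}. ?recovers i c}" if i: "i < p" for i
  proof -
    have "\<exists>S. (\<forall>j<k. S j \<subseteq> {0..<m}) \<and> (\<forall>j<k. \<forall>j'<k. j \<noteq> j' \<longrightarrow> S j \<inter> S j' = {}) \<and>
        (\<forall>j<k. in_col_span R t p A (S j) i)"
      using code i unfolding is_PIR_array_code_def by simp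
    then obtain S where S: "\<forall>j<k. S j \<subseteq> {0..<m}" "\<forall>j<k. \<forall>j'<k. j \<noteq> j' \<longrightarrow> S j \<inter> S j' = {}"
      "\<forall>j<k. in_col_span R t p A (S j) i"
      by blast
    have "{c. \<exists>j<k. S j = {c}} \<subseteq> {c\<in>{..<m}. ?recovers i c}"
      using S by fastforce
    then have "card {c. \<exists>j<k. S j = {c}} \<le> card {c\<in>{..<m}. ?recovers i c}"
      by (intro card_mono) auto
    moreover have "2 * k \<le> card {0..<m} + card {c. \<exists>j<k. S j = {c}}"
      using S in_col_span_nonempty[OF field i] by (intro card_disjoint_family_singletons) auto
    ultimately show ?thesis by simp
  qed
  have "2 * p * k = (\<Sum>i<p. 2 * k)" by simp
  also have "\<dots> \<le> (\<Sum>i<p. m + card {c\<in>{..<m}. ?recovers i c})"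
    using per_symbol by (intro sum_mono) auto
  also have "\<dots> = p * m + (\<Sum>i<p. card {c\<in>{..<m}. ?recovers i c})"
    by (simp add: sum.distrib)
  also have "(\<Sum>i<p. card {c\<in>{..<m}. ?recovers i c}) = (\<Sum>c<m. card {i\<in>{..<p}. ?recovers i c})"
    by (rule sum_multicount_gen) auto
  also have "\<dots> \<le> (\<Sum>c<m. t)"
    using card_recoverable_from_column[OF field] code
    by (intro sum_mono) (auto simp: is_PIR_array_code_def)
  finally show ?thesis by (simp add: algebra_simps)
qed

section \<open>A binary construction\<close>

definition GF2 :: "nat ring" where
  "GF2 = \<lparr>carrier = {0, 1}, monoid.mult = (\<lambda>x y. x * y), one = 1, zero = 0,
          add = (\<lambda>x y. (x + y) mod 2)\<rparr>"

lemma GF2_simps [simp]: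
  "carrier GF2 = {0, 1}" "mult GF2 = (\<lambda>x y. x * y)" "one GF2 = 1" "zero GF2 = 0"
  "add GF2 = (\<lambda>x y. (x + y) mod 2)"
  by (simp_all add: GF2_def)

lemma GF2_cring: "cring GF2"
proof (rule cringI)
  show "abelian_group GF2"
  proof (rule abelian_groupI)
    fix x assume "x \<in> carrier GF2"
    then show "\<exists>y\<in>carrier GF2. y \<oplus>\<^bsub>GF2\<^esub> x = \<zero>\<^bsub>GF2\<^esub>"
      by (intro bexI[of _ x]) auto
  qed (auto simp: mod_add_left_eq mod_add_right_eq add.assoc)
  show "comm_monoid GF2"
    by (rule comm_monoidI) auto
qed auto

lemma GF2_field: "field GF2"
proof -
  interpret cring GF2 by (rule GF2_cring)
  have "Units GF2 = {1}"
    unfolding Units_def by auto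
  then show ?thesis by (intro cring_fieldI) auto
qed

lemma GF2_finsum:
  assumes "finite A" "f \<in> A \<rightarrow> {0, 1}"
  shows "finsum GF2 f A = (\<Sum>a\<in>A. f a) mod 2"
  using assms
proof (induction A rule: finite_induct)
  case (insert x F)
  interpret cring GF2 by (rule GF2_cring)
  have "finsum GF2 f (insert x F) = (f x + (\<Sum>a\<in>F. f a) mod 2) mod 2"
    using insert by (simp add: finsum_insert)
  then show ?case using insert by (simp add: mod_add_right_eq)
qed (simp add: GF2_def finsum_def finprod_def)

lemma GF2_in_col_span_of_row:
  assumes A: "\<forall>r c l. A r c l \<in> {0, 1}" and S: "finite S" and j: "j < t"
    and row: "\<forall>l<p. (\<Sum>c\<in>S. A j c l) mod 2 = (if l = i then 1 else 0)"
  shows "in_col_span GF2 t p A S i"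
  unfolding in_col_span_def
proof (intro exI[of _ "\<lambda>(r, c). if r = j then 1 else 0"] conjI ballI allI impI)
  fix l assume l: "l < p"
  let ?f = "\<lambda>(r, c). (\<lambda>(r, c). if r = j then 1 else 0) (r, c) \<otimes>\<^bsub>GF2\<^esub> A r c l"
  have "finsum GF2 ?f ({0..<t} \<times> S) = (\<Sum>x\<in>{0..<t} \<times> S. ?f x) mod 2"
    using A S by (intro GF2_finsum) (auto simp: Pi_def)
  also have "(\<Sum>x\<in>{0..<t} \<times> S. ?f x) = (\<Sum>r\<in>{0..<t}. \<Sum>c\<in>S. ?f (r, c))"
    by (simp add: sum.cartesian_product)
  also have "\<dots> = (\<Sum>r\<in>{0..<t}. if r = j then (\<Sum>c\<in>S. A j c l) else 0)"
    by (intro sum.cong) auto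
  also have "\<dots> = (\<Sum>c\<in>S. A j c l)"
    using j by simp
  finally show "finsum GF2 ?f ({0..<t} \<times> S) = (if l = i then \<one>\<^bsub>GF2\<^esub> else \<zero>\<^bsub>GF2\<^esub>)"
    using row l by simp
qed (auto split: prod.splits)

lemma PIR_array_code_of_partitions:
  fixes R (structure) and part :: "nat \<Rightarrow> nat \<Rightarrow> 'b"
  assumes code: "is_array_code R t m p A"
    and parts: "\<forall>i<p. k \<le> card (part i ` {0..<m})"
    and recover: "\<forall>i<p. \<forall>y\<in>part i ` {0..<m}. in_col_span R t p A {c\<in>{0..<m}. part i c = y} i"
  shows "is_PIR_array_code R t m p k A"
  unfolding is_PIR_array_code_def
proof (intro conjI code allI impI)
  fix i assume i: "i < p"
  obtain e where e: "bij_betw e {0..<card (part i ` {0..<m})} (part i ` {0..<m})"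
    using ex_bij_betw_nat_finite by blast
  have index: "j \<in> {0..<card (part i ` {0..<m})}" if "j < k" for j
    using parts i that by (simp add: order_less_le_trans)
  have in_classes: "e j \<in> part i ` {0..<m}" if "j < k" for j
    by (rule bij_betw_apply[OF e index[OF that]])
  have distinct: "e j \<noteq> e j'" if "j < k" "j' < k" "j \<noteq> j'" for j j'
    using inj_on_eq_iff[OF bij_betw_imp_inj_on[OF e] index[OF that(1)] index[OF that(2)]] that(3)
    by simp
  show "\<exists>S. (\<forall>j<k. S j \<subseteq> {0..<m}) \<and> (\<forall>j<k. \<forall>j'<k. j \<noteq> j' \<longrightarrow> S j \<inter> S j' = {}) \<and>
      (\<forall>j<k. in_col_span R t p A (S j) i)"
  proof (intro exI[of _ "\<lambda>j. {c\<in>{0..<m}. part i c = e j}"] conjI allI impI)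
    fix j assume j: "j < k"
    show "{c\<in>{0..<m}. part i c = e j} \<subseteq> {0..<m}" by blast
    show "in_col_span R t p A {c\<in>{0..<m}. part i c = e j} i"
      by (rule recover[rule_format, OF i in_classes[OF j]])
    fix j' assume "j' < k" "j \<noteq> j'"
    then show "{c\<in>{0..<m}. part i c = e j} \<inter> {c\<in>{0..<m}. part i c = e j'} = {}"
      using distinct[OF j \<open>j' < k\<close> \<open>j \<noteq> j'\<close>] by auto
  qed
qed

lemma GF2_PIR_array_code_of_labelled_columns:
  fixes B :: "nat \<Rightarrow> 'x \<Rightarrow> nat \<Rightarrow> nat" and part :: "nat \<Rightarrow> 'x \<Rightarrow> 'b"
  assumes X: "finite X" and B: "\<forall>r x l. B r x l \<in> {0, 1}"
    and parts: "\<forall>i<p. k \<le> card (part i ` X)"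
    and recover: "\<forall>i<p. \<forall>y\<in>part i ` X. \<exists>r<t.
      \<forall>l<p. (\<Sum>x\<in>{x\<in>X. part i x = y}. B r x l) mod 2 = (if l = i then 1 else 0)"
  shows "\<exists>A. is_PIR_array_code GF2 t (card X) p k A"
proof -
  obtain h where h: "bij_betw h {0..<card X} X"
    using ex_bij_betw_nat_finite[OF X] by blast
  define A where "A r c l = B r (h c) l" for r c l
  have A01: "\<forall>r c l. A r c l \<in> {0, 1}" using B by (simp add: A_def)
  have classes: "(\<lambda>c. part i (h c)) ` {0..<card X} = part i ` X" for i
    using image_image[of "part i" h "{0..<card X}"] bij_betw_imp_surj_on[OF h] by simp
  have h_class: "bij_betw h {c\<in>{0..<card X}. part i (h c) = y} {x\<in>X. part i x = y}" for i y
    by (rule bij_betw_Collect[OF h]) simp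
  have recover_columns: "in_col_span GF2 t p A {c\<in>{0..<card X}. part i (h c) = y} i"
    if iy: "i < p" "y \<in> part i ` X" for i y
  proof -
    obtain r where r: "r < t"
      and row: "\<forall>l<p. (\<Sum>x\<in>{x\<in>X. part i x = y}. B r x l) mod 2 = (if l = i then 1 else 0)"
      using recover[rule_format, OF iy] by blast
    have "(\<Sum>c\<in>{c\<in>{0..<card X}. part i (h c) = y}. A r c l) = (\<Sum>x\<in>{x\<in>X. part i x = y}. B r x l)"
      for l
      unfolding A_def by (rule sum.reindex_bij_betw[OF h_class])
    then show ?thesis
      using A01 r row by (intro GF2_in_col_span_of_row[where j = r]) simp_all
  qed
  have "is_PIR_array_code GF2 t (card X) p k A"
  proof (rule PIR_array_code_of_partitions[where part = "\<lambda>i c. part i (h c)"])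
    show "is_array_code GF2 t (card X) p A"
      using A01 unfolding is_array_code_def by simp
    show "\<forall>i<p. k \<le> card ((\<lambda>c. part i (h c)) ` {0..<card X})"
      using parts by (simp only: classes)
    show "\<forall>i<p. \<forall>y\<in>(\<lambda>c. part i (h c)) ` {0..<card X}.
        in_col_span GF2 t p A {c\<in>{0..<card X}. part i (h c) = y} i"
      unfolding classes using recover_columns by (intro allI impI ballI)
  qed
  then show ?thesis by blast
qed

lemma card_rotations_hitting:
  assumes "L \<le> p" "i < p"
  shows "L \<le> card {c\<in>{..<p}. \<exists>r<L. (c + r) mod p = i}"
proof -
  let ?c = "\<lambda>r. (i + p - r) mod p"
  have "?c ` {..<L} \<subseteq> {c\<in>{..<p}. \<exists>r<L. (c + r) mod p = i}"
  proof (rule image_subsetI)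
    fix r assume "r \<in> {..<L}"
    then have "(?c r + r) mod p = (i + p) mod p"
      using assms by (simp add: mod_add_left_eq)
    then show "?c r \<in> {c\<in>{..<p}. \<exists>r<L. (c + r) mod p = i}"
      using assms \<open>r \<in> {..<L}\<close> by auto
  qed
  moreover have "inj_on ?c {..<L}"
  proof (rule inj_onI)
    fix r r' assume "r \<in> {..<L}" "r' \<in> {..<L}" "?c r = ?c r'"
    then show "r = r'"
      using assms by (auto simp: mod_if split: if_splits)
  qed
  ultimately show ?thesis
    using card_inj_on_le[of ?c "{..<L}"] by auto
qed

definition recovery_class :: "nat \<Rightarrow> nat set \<Rightarrow> nat \<times> nat set \<Rightarrow> nat \<times> nat set" where
  "recovery_class i C = (\<lambda>(c, W). if c \<in> C then (c, W) else (c, W - {i}))"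

lemma recovery_class_fibre:
  assumes "i < p" "c < p" "W \<subseteq> {..<p}"
  shows "{x\<in>{..<p} \<times> Pow {..<p}. recovery_class i C x = recovery_class i C (c, W)} =
    (if c \<in> C then {(c, W)} else {(c, W - {i}), (c, insert i W)})"
  using assms unfolding recovery_class_def by (auto split: if_splits; blast)

lemma card_recovery_classes:
  assumes "C \<subseteq> {..<p}" "i < p"
  shows "card (recovery_class i C ` ({..<p} \<times> Pow {..<p})) = 2 ^ (p - 1) * (p + card C)"
proof -
  have "recovery_class i C ` ({..<p} \<times> Pow {..<p}) =
      C \<times> Pow {..<p} \<union> ({..<p} - C) \<times> Pow ({..<p} - {i})" (is "?classes = ?R")
  proof
    show "?classes \<subseteq> ?R"
      using assms by (auto simp: recovery_class_def split: if_splits)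
    show "?R \<subseteq> ?classes"
    proof
      fix y assume "y \<in> ?R"
      then obtain c W where y: "y = (c, W)" "(c, W) \<in> {..<p} \<times> Pow {..<p}" "c \<in> C \<or> i \<notin> W"
        using assms by auto
      then have "y = recovery_class i C (c, W)"
        by (auto simp: recovery_class_def)
      then show "y \<in> ?classes"
        using y(2) by (rule image_eqI)
    qed
  qed
  moreover have "card (C \<times> Pow {..<p} \<union> ({..<p} - C) \<times> Pow ({..<p} - {i})) =
      card C * 2 ^ p + (p - card C) * 2 ^ (p - 1)"
    using assms finite_subset[OF assms(1)]
    by (subst card_Un_disjoint) (auto simp: card_cartesian_product card_Pow card_Diff_subset)
  moreover have "card C \<le> p"
    using card_mono[OF _ assms(1)] by simp
  moreover have "(2::nat) ^ p = 2 * 2 ^ (p - 1)"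
    using assms(2) by (cases p) auto
  ultimately show ?thesis
    by (simp add: algebra_simps diff_mult_distrib)
qed

lemma GF2_PIR_array_code_exists:
  assumes t: "0 < t" "t < p"
  shows "\<exists>A. is_PIR_array_code GF2 t (p * 2 ^ p) p (2 ^ (p - 1) * (p + t - 1)) A"
proof -
  define X where "X = {..<p} \<times> Pow {..<p}"
  define B :: "nat \<Rightarrow> nat \<times> nat set \<Rightarrow> nat \<Rightarrow> nat" where
    "B r = (\<lambda>(c, W) l. if r < t - 1 then of_bool ((c + r) mod p = l) else of_bool (l \<in> W))"
    for r
  define hits where "hits i = {c\<in>{..<p}. \<exists>r<t - 1. (c + r) mod p = i}" for i
  have "\<exists>A. is_PIR_array_code GF2 t (card X) p (2 ^ (p - 1) * (p + t - 1)) A"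
  proof (rule GF2_PIR_array_code_of_labelled_columns[where part = "\<lambda>i. recovery_class i (hits i)"])
    show "finite X" by (simp add: X_def)
    show "\<forall>r x l. B r x l \<in> {0, 1}" by (simp add: B_def split: prod.splits)
    show "\<forall>i<p. 2 ^ (p - 1) * (p + t - 1) \<le> card (recovery_class i (hits i) ` X)"
    proof (intro allI impI)
      fix i assume "i < p"
      moreover have "hits i \<subseteq> {..<p}" by (auto simp: hits_def)
      moreover have "t - 1 \<le> card (hits i)"
        using t \<open>i < p\<close> unfolding hits_def by (intro card_rotations_hitting) auto
      ultimately show "2 ^ (p - 1) * (p + t - 1) \<le> card (recovery_class i (hits i) ` X)"
        using t unfolding X_def by (simp add: card_recovery_classes)
    qed
    show "\<forall>i<p. \<forall>y\<in>recovery_class i (hits i) ` X. \<exists>r<t. \<forall>l<p.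
        (\<Sum>x\<in>{x\<in>X. recovery_class i (hits i) x = y}. B r x l) mod 2 = (if l = i then 1 else 0)"
    proof (intro allI impI ballI)
      fix i y assume i: "i < p" and "y \<in> recovery_class i (hits i) ` X"
      then obtain c W where cW: "c < p" "W \<subseteq> {..<p}" "y = recovery_class i (hits i) (c, W)"
        unfolding X_def by auto
      note fibre = recovery_class_fibre[OF i cW(1,2), of "hits i", folded X_def cW(3)]
      show "\<exists>r<t. \<forall>l<p.
          (\<Sum>x\<in>{x\<in>X. recovery_class i (hits i) x = y}. B r x l) mod 2 = (if l = i then 1 else 0)"
      proof (cases "c \<in> hits i")
        case True
        then obtain r where "r < t - 1" "(c + r) mod p = i"
          unfolding hits_def by auto
        then show ?thesis
          using True by (intro exI[of _ r]) (auto simp: fibre B_def)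
      next
        case False
        have "(c, W - {i}) \<noteq> (c, insert i W)" by auto
        then show ?thesis
          using False by (intro exI[of _ "t - 1"]) (auto simp: fibre B_def t)
      qed
    qed
  qed
  then show ?thesis by (simp add: X_def card_cartesian_product card_Pow)
qed

section \<open>The limit\<close>

lemma g_st_upper_bound:
  assumes s: "s > 1" and t: "t > 0"
  shows "g_st s t \<le> ereal ((real_of_rat s + 1) / (2 * real_of_rat s))"
  unfolding g_st_def
proof (rule Sup_least)
  fix x assume "x \<in> {ereal (real k / real m) | k m. m > 0 \<and>
      (\<exists>(R :: nat ring) p A. field R \<and> finite (carrier R) \<and> of_nat p = s * of_nat t \<and>
         is_PIR_array_code R t m p k A)}"
  then obtain k m R p A where x: "x = ereal (real k / real m)" and m: "m > 0" and field: "field R"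
    and p: "of_nat p = s * of_nat t" and code: "is_PIR_array_code R t m p k A"
    by blast
  have rs: "real_of_rat s > 1" using s by (simp add: one_less_of_rat_iff)
  have "real p = real_of_rat s * real t"
    using arg_cong[OF p, of real_of_rat] by (simp add: of_rat_mult)
  moreover have "real (2 * p * k) \<le> real (m * (p + t))"
    using PIR_array_code_rate_bound[OF field code] by (simp only: of_nat_le_iff)
  ultimately have "(2 * real_of_rat s * real k) * real t \<le> (real m * (real_of_rat s + 1)) * real t"
    by (simp add: algebra_simps)
  then have "2 * real_of_rat s * real k \<le> real m * (real_of_rat s + 1)"
    using t by simp
  then show "x \<le> ereal ((real_of_rat s + 1) / (2 * real_of_rat s))"
    using rs m unfolding x by (simp add: field_simps)
qed

lemma g_st_lower_bound:
  assumes s: "s > 1" and t: "t > 0" and st: "s * of_nat t \<in> \<int>"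
  shows "ereal ((real_of_rat s + 1) / (2 * real_of_rat s) - 1 / (2 * real_of_rat s * real t))
    \<le> g_st s t"
proof -
  have rs: "real_of_rat s > 1" using s by (simp add: one_less_of_rat_iff)
  obtain z where z: "s * of_nat t = of_int z" using st by (auto elim: Ints_cases)
  have "0 < s * of_nat t" using s t by simp
  then have "z > 0" using z by simp
  define p where "p = nat z"
  have p: "of_nat p = s * of_nat t" unfolding p_def using z \<open>z > 0\<close> by simp
  have rp: "real p = real_of_rat s * real t"
    using arg_cong[OF p, of real_of_rat] by (simp add: of_rat_mult)
  have "real t < real p" unfolding rp using rs t by simp
  then have "t < p" by simp
  then obtain A where "is_PIR_array_code GF2 t (p * 2 ^ p) p (2 ^ (p - 1) * (p + t - 1)) A"
    using GF2_PIR_array_code_exists t by blast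
  then have "ereal (real (2 ^ (p - 1) * (p + t - 1)) / real (p * 2 ^ p)) \<in>
     {ereal (real k / real m) | k m. m > 0 \<and>
      (\<exists>(R :: nat ring) p A. field R \<and> finite (carrier R) \<and> of_nat p = s * of_nat t \<and>
         is_PIR_array_code R t m p k A)}"
    using p GF2_field \<open>t < p\<close> by (intro CollectI exI conjI) (auto simp: GF2_def)
  then have "ereal (real (2 ^ (p - 1) * (p + t - 1)) / real (p * 2 ^ p)) \<le> g_st s t"
    unfolding g_st_def by (rule Sup_upper)
  moreover have "(2::nat) ^ p = 2 * 2 ^ (p - 1)" using \<open>t < p\<close> by (cases p) auto
  then have "real (2 ^ (p - 1) * (p + t - 1)) / real (p * 2 ^ p)
      = (real_of_rat s + 1) / (2 * real_of_rat s) - 1 / (2 * real_of_rat s * real t)"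
    using t rs rp by (simp add: of_nat_diff field_simps)
  ultimately show ?thesis by simp
qed

lemma integral_multiples_filter_neq_bot:
  fixes s :: rat
  shows "inf sequentially (principal {t :: nat. t > 0 \<and> s * of_nat t \<in> \<int>}) \<noteq> bot"
proof -
  obtain a b where "quotient_of s = (a, b)" by (cases "quotient_of s")
  then have b: "b > 0" and s: "s = of_int a / of_int b"
    using quotient_of_denom_pos quotient_of_div by blast+
  have "nat b * (N + 1) \<ge> N \<and> s * of_nat (nat b * (N + 1)) \<in> \<int> \<and> nat b * (N + 1) > 0" for N
  proof -
    have "s * of_nat (nat b * (N + 1)) = of_int (a * (int N + 1))"
      unfolding s using b by (simp add: field_simps)
    moreover have "1 * (N + 1) \<le> nat b * (N + 1)"
      using b by (intro mult_le_mono1) simp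
    ultimately show ?thesis using b by simp
  qed
  then show ?thesis
    unfolding eventually_False[symmetric] eventually_inf_principal eventually_sequentially
    by blast
qed

theorem theorem13:
  fixes s :: rat
  assumes "s > 1"
  shows "g_s s = ereal (real_of_rat ((s + 1) / (2 * s)))"
proof -
  define F where "F = inf sequentially (principal {t :: nat. t > 0 \<and> s * of_nat t \<in> \<int>})"
  define L where "L = (real_of_rat s + 1) / (2 * real_of_rat s)"
  have lower: "eventually (\<lambda>t. ereal (L - 1 / (2 * real_of_rat s * real t)) \<le> g_st s t) F"
    unfolding F_def eventually_inf_principal L_def using g_st_lower_bound[OF assms] by simp
  have upper: "eventually (\<lambda>t. g_st s t \<le> ereal L) F"
    unfolding F_def eventually_inf_principal L_def using g_st_upper_bound[OF assms] by simp
  have "(\<lambda>t. L - (1 / (2 * real_of_rat s)) / real t) \<longlonglongrightarrow> L - 0"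
    by (intro tendsto_diff tendsto_const lim_const_over_n)
  then have "((\<lambda>t. ereal (L - 1 / (2 * real_of_rat s * real t))) \<longlongrightarrow> ereal L) F"
    unfolding F_def by (intro tendsto_mono[OF inf_le1]) (simp add: lim_ereal)
  then have "(g_st s \<longlongrightarrow> ereal L) F"
    by (rule tendsto_sandwich[OF lower upper _ tendsto_const])
  then have "Limsup F (g_st s) = ereal L"
    using integral_multiples_filter_neq_bot unfolding F_def by (intro lim_imp_Limsup)
  then show ?thesis
    unfolding g_s_def F_def L_def by (simp add: of_rat_divide of_rat_add of_rat_mult)
qed

end
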